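(* Let $\mathcal{T}$ be a directed poset, $X:\mathcal{T}\to\mathbf{Set}_*$ a diagram of pointed sets, $A$ an abelian group, and $h\in G(X,A)$. Then $h\in K(X,A)$ if and only if the set $\{|h(t)|:t\in\mathcal{T}\}$ is bounded.
   Context: A directed poset $\mathcal{T}$ is regarded as a category with a single morphism $t\to s$ whenever $t\ge s$; $\phi_{t,s}:X(t)\to X(s)$ denotes the structure map. For a pointed set $Y$, $Y\wedge A:=\bigoplus_{Y\setminus\{*\}}A$, with elements finitely supported pointed maps $y:Y\to A$, $s\mapsto y_s$; $\mathrm{supp}(y)=\{s:y_s\neq0\}$ and $|y|:=|\mathrm{supp}(y)|$; $sv$ denotes the element with value $v$ at $s$ and $0$ elsewhere ($*v=0$); pointed maps induce homomorphisms via $f_*(sv)=f(s)v$. Define $G(X,A):=\lim_\mathcal{T}(X\wedge A)$ and let $K(X,A)\subseteq G(X,A)$ be the image of the (injective) natural map $\rho:(\lim_\mathcal{T}X)\wedge A\to G(X,A)$, $\rho(xv)(t)=x(t)v$. *)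

theory Defs
  imports Main
begin

definition directed_poset :: "('t::order) itself \<Rightarrow> bool" where
  "directed_poset _ \<longleftrightarrow> (\<forall>a b::'t. \<exists>c. a \<le> c \<and> b \<le> c)"

text \<open>A diagram of pointed sets on the poset: X t is the carrier, p t the basepoint,
  phi t s : X t \<rightarrow> X s the structure map for t \<ge> s (functorial, pointed).\<close>
definition pointed_diagram ::
  "('t::order \<Rightarrow> 'x set) \<Rightarrow> ('t \<Rightarrow> 'x) \<Rightarrow> ('t \<Rightarrow> 't \<Rightarrow> 'x \<Rightarrow> 'x) \<Rightarrow> bool" where
  "pointed_diagram X p phi \<longleftrightarrow>
     (\<forall>t. p t \<in> X t) \<and>
     (\<forall>t s. s \<le> t \<longrightarrow> (\<forall>x\<in>X t. phi t s x \<in> X s) \<and> phi t s (p t) = p s) \<and>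
     (\<forall>t. \<forall>x\<in>X t. phi t t x = x) \<and>
     (\<forall>t s r. r \<le> s \<longrightarrow> s \<le> t \<longrightarrow> (\<forall>x\<in>X t. phi s r (phi t s x) = phi t r x))"

text \<open>Support of a function into an abelian group and its size |y|.\<close>
definition supp :: "('x \<Rightarrow> 'a::zero) \<Rightarrow> 'x set" where
  "supp y = {s. y s \<noteq> 0}"

text \<open>Y \<and> A for the pointed set (Y, pt): finitely supported maps Y \<rightarrow> A, vanishing at
  the basepoint (and, by convention, outside Y).\<close>
definition smash :: "'x set \<Rightarrow> 'x \<Rightarrow> ('x \<Rightarrow> 'a::ab_group_add) set" where
  "smash Y pt = {y. finite (supp y) \<and> supp y \<subseteq> Y - {pt}}"

text \<open>Induced homomorphism f_* with f_*(s v) = f(s) v, target basepoint q (q v = 0).\<close>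
definition push :: "('x \<Rightarrow> 'y) \<Rightarrow> 'y \<Rightarrow> ('x \<Rightarrow> 'a::ab_group_add) \<Rightarrow> ('y \<Rightarrow> 'a)" where
  "push f q y = (\<lambda>s'. if s' = q then 0 else (\<Sum>s\<in>{s\<in>supp y. f s = s'}. y s))"

definition G_lim ::
  "('t::order \<Rightarrow> 'x set) \<Rightarrow> ('t \<Rightarrow> 'x) \<Rightarrow> ('t \<Rightarrow> 't \<Rightarrow> 'x \<Rightarrow> 'x)
   \<Rightarrow> ('t \<Rightarrow> 'x \<Rightarrow> 'a::ab_group_add) set" where
  "G_lim X p phi = {h. (\<forall>t. h t \<in> smash (X t) (p t)) \<and>
                        (\<forall>t s. s \<le> t \<longrightarrow> push (phi t s) (p s) (h t) = h s)}"

definition lim_X ::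
  "('t::order \<Rightarrow> 'x set) \<Rightarrow> ('t \<Rightarrow> 't \<Rightarrow> 'x \<Rightarrow> 'x) \<Rightarrow> ('t \<Rightarrow> 'x) set" where
  "lim_X X phi = {x. (\<forall>t. x t \<in> X t) \<and> (\<forall>t s. s \<le> t \<longrightarrow> phi t s (x t) = x s)}"

text \<open>rho : (lim X) \<and> A \<rightarrow> G(X,A), rho(x v)(t) = x(t) v, i.e. rho(y)(t) = (ev_t)_* y.\<close>
definition rho :: "('t \<Rightarrow> 'x) \<Rightarrow> (('t \<Rightarrow> 'x) \<Rightarrow> 'a::ab_group_add) \<Rightarrow> ('t \<Rightarrow> 'x \<Rightarrow> 'a)" where
  "rho p y = (\<lambda>t. push (\<lambda>x. x t) (p t) y)"

definition K_img ::
  "('t::order \<Rightarrow> 'x set) \<Rightarrow> ('t \<Rightarrow> 'x) \<Rightarrow> ('t \<Rightarrow> 't \<Rightarrow> 'x \<Rightarrow> 'x)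
   \<Rightarrow> ('t \<Rightarrow> 'x \<Rightarrow> 'a::ab_group_add) set" where
  "K_img X p phi = rho p ` smash (lim_X X phi) p"

end

(*
  If h = \<rho> y, each h(t) is the pushforward of y along evaluation at t, so |h(t)| \<le> |y|.
  Conversely, pushforward does not increase support size, so t \<mapsto> |h(t)| is monotone; choose
  t0 with |h(t0)| maximal. Above t0 all support sizes coincide, hence every structure map
  restricts to a bijection between supports. So each a \<in> supp h(t0) has a unique preimage in
  supp h(c) for every c \<ge> t0, and these preimages assemble to a thread x_a \<in> lim X. Then
  y = \<Sum>a x_a h(t0)(a) satisfies \<rho> y (c) = h(c) for c \<ge> t0, and two elements of G that agree on
  a cofinal set are equal since the poset is directed.
*)
theory Submission
  imports Defs
begin

lemma supp_push_subset: "supp (push f q y) \<subseteq> f ` supp y - {q}"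
proof
  fix s assume "s \<in> supp (push f q y)"
  then have "s \<noteq> q" and "(\<Sum>b\<in>{b\<in>supp y. f b = s}. y b) \<noteq> 0"
    by (auto simp: supp_def push_def split: if_splits)
  moreover from this(2) have "{b\<in>supp y. f b = s} \<noteq> {}"
    by (auto simp del: Collect_empty_eq)
  ultimately show "s \<in> f ` supp y - {q}"
    by blast
qed

lemma card_supp_push_le:
  assumes "finite (supp y)"
  shows "card (supp (push f q y)) \<le> card (supp y)"
proof -
  have "card (supp (push f q y)) \<le> card (f ` supp y)"
    using supp_push_subset[of f q y] assms by (meson Diff_subset card_mono finite_imageI subset_trans)
  also have "\<dots> \<le> card (supp y)"
    using assms by (rule card_image_le)
  finally show ?thesis .
qed

lemma push_congr:
  assumes "\<And>b. b \<in> supp y \<Longrightarrow> f b = g b"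
  shows "push f q y = push g q y"
  unfolding push_def using assms by (intro ext if_cong refl sum.cong) auto

lemma push_apply_inj:
  assumes "inj_on f (supp y)" "b \<in> supp y" "f b \<noteq> q"
  shows "push f q y (f b) = y b"
proof -
  have "{b'\<in>supp y. f b' = f b} = {b}"
    using assms(1,2) by (auto dest: inj_onD)
  then show ?thesis
    using assms(3) by (simp add: push_def)
qed

lemma push_comp:
  assumes "finite (supp y)" "g q = r"
  shows "push g r (push f q y) = push (g \<circ> f) r y"
proof
  fix s
  show "push g r (push f q y) s = push (g \<circ> f) r y s"
  proof (cases "s = r")
    case False
    \<comment> \<open>As \<open>s \<noteq> r = g q\<close>, the fibre of \<open>g \<circ> f\<close> over \<open>s\<close> is the union of the fibres of \<open>f\<close> over \<open>B\<close>.\<close>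
    define B where "B = {b \<in> f ` supp y. b \<noteq> q \<and> g b = s}"
    have fin_B: "finite B"
      using assms(1) by (simp add: B_def)
    have "push g r (push f q y) s = (\<Sum>b\<in>{b\<in>supp (push f q y). g b = s}. push f q y b)"
      using False by (simp add: push_def[of g])
    also have "\<dots> = (\<Sum>b\<in>B. push f q y b)"
    proof (rule sum.mono_neutral_left[OF fin_B])
      show "{b\<in>supp (push f q y). g b = s} \<subseteq> B"
        using supp_push_subset[of f q y] by (auto simp: B_def)
      show "\<forall>b\<in>B - {b\<in>supp (push f q y). g b = s}. push f q y b = 0"
        by (auto simp: B_def supp_def)
    qed
    also have "\<dots> = (\<Sum>b\<in>B. \<Sum>a | a \<in> {a\<in>supp y. g (f a) = s} \<and> f a = b. y a)"
    proof (rule sum.cong[OF refl])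
      fix b assume "b \<in> B"
      then have "b \<noteq> q" and "{a\<in>supp y. f a = b} = {a. a \<in> {a\<in>supp y. g (f a) = s} \<and> f a = b}"
        by (auto simp: B_def)
      then show "push f q y b = (\<Sum>a | a \<in> {a\<in>supp y. g (f a) = s} \<and> f a = b. y a)"
        by (simp add: push_def)
    qed
    also have "\<dots> = (\<Sum>a\<in>{a\<in>supp y. g (f a) = s}. y a)"
      using assms False by (intro sum.group fin_B) (auto simp: B_def)
    also have "\<dots> = push (g \<circ> f) r y s"
      using False by (simp add: push_def)
    finally show ?thesis .
  next
    case True
    then show ?thesis
      unfolding push_def by simp
  qed
qed

lemma push_card_supp_eq_bij_betw:
  assumes "finite (supp y)" "card (supp (push f q y)) = card (supp y)"
  shows "bij_betw f (supp y) (supp (push f q y))"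
proof -
  have sub: "supp (push f q y) \<subseteq> f ` supp y"
    using supp_push_subset by fast
  have "card (f ` supp y) \<le> card (supp y)"
    using assms(1) by (rule card_image_le)
  moreover have "card (supp (push f q y)) \<le> card (f ` supp y)"
    using assms(1) sub by (intro card_mono) auto
  ultimately have card_img: "card (f ` supp y) = card (supp y)"
    and "card (supp (push f q y)) = card (f ` supp y)"
    using assms(2) by linarith+
  then have "f ` supp y = supp (push f q y)"
    using assms(1) sub by (metis card_subset_eq finite_imageI)
  moreover have "inj_on f (supp y)"
    using assms(1) card_img by (rule eq_card_imp_inj_on)
  ultimately show ?thesis
    by (simp add: bij_betw_def)
qed

lemma push_inverse:
  assumes "bij_betw f (supp z) (supp (push f q z))"
    and "\<And>a. a \<in> supp (push f q z) \<Longrightarrow> g a \<in> supp z \<and> f (g a) = a"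
    and "r \<notin> supp z"
  shows "push g r (push f q z) = z"
proof
  fix s
  show "push g r (push f q z) s = z s"
  proof (cases "s \<in> supp z")
    case True
    have inj_f: "inj_on f (supp z)" and fs: "f s \<in> supp (push f q z)"
      using assms(1) True by (auto simp: bij_betw_def)
    have "inj_on g (supp (push f q z))"
      by (rule inj_onI) (metis assms(2))
    moreover have "g (f s) = s"
      using assms(2)[OF fs] inj_f True by (auto dest: inj_onD)
    ultimately have "push g r (push f q z) s = push f q z (f s)"
      using push_apply_inj[OF _ fs, of g r] assms(3) True by auto
    also have "\<dots> = z s"
      using push_apply_inj[OF inj_f True] fs supp_push_subset[of f q z] by blast
    finally show ?thesis .
  next
    case False
    have "supp (push g r (push f q z)) \<subseteq> supp z"
      using supp_push_subset[of g r "push f q z"] assms(2) by blast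
    with False show ?thesis
      by (auto simp: supp_def)
  qed
qed

lemma bounded_nat_fun_has_max:
  fixes f :: "'t \<Rightarrow> nat"
  assumes "\<And>t. f t \<le> B"
  obtains t0 where "\<And>t. f t \<le> f t0"
proof -
  have fin: "finite (range f)"
    using assms by (meson atMost_iff finite_atMost finite_subset image_subsetI)
  then obtain t0 where "f t0 = Max (range f)"
    by (metis (mono_tags, lifting) Max_in UNIV_not_empty image_iff image_is_empty)
  with fin show ?thesis
    by (intro that[of t0]) simp
qed

lemma directed_posetD:
  fixes a b :: "'t::order"
  assumes "directed_poset TYPE('t)"
  obtains c where "a \<le> c" "b \<le> c"
  using assms unfolding directed_poset_def by blast

lemma pointed_diagramD:
  assumes "pointed_diagram X p phi"
  shows "\<And>s t x. s \<le> t \<Longrightarrow> x \<in> X t \<Longrightarrow> phi t s x \<in> X s"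
    and "\<And>s t. s \<le> t \<Longrightarrow> phi t s (p t) = p s"
    and "\<And>t x. x \<in> X t \<Longrightarrow> phi t t x = x"
    and "\<And>r s t x. r \<le> s \<Longrightarrow> s \<le> t \<Longrightarrow> x \<in> X t \<Longrightarrow> phi s r (phi t s x) = phi t r x"
  using assms unfolding pointed_diagram_def by blast+

lemma G_limD:
  assumes "h \<in> G_lim X p phi"
  shows "finite (supp (h t))"
    and "supp (h t) \<subseteq> X t - {p t}"
    and "s \<le> t \<Longrightarrow> push (phi t s) (p s) (h t) = h s"
  using assms unfolding G_lim_def smash_def by blast+

lemma card_supp_G_lim_mono:
  assumes "h \<in> G_lim X p phi" "s \<le> t"
  shows "card (supp (h s)) \<le> card (supp (h t))"
  using card_supp_push_le[OF G_limD(1)[OF assms(1), of t], of "phi t s" "p s"]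
  by (simp add: G_limD(3)[OF assms])

lemma G_lim_eqI_cofinal:
  fixes g h :: "'t::order \<Rightarrow> 'x \<Rightarrow> 'a::ab_group_add"
  assumes "directed_poset TYPE('t)"
    and "g \<in> G_lim X p phi" "h \<in> G_lim X p phi"
    and "\<And>c. t0 \<le> c \<Longrightarrow> g c = h c"
  shows "g = h"
proof
  fix t
  obtain c where c: "t \<le> c" "t0 \<le> c"
    using directed_posetD[OF assms(1), of t t0] by blast
  have "g t = push (phi c t) (p t) (g c)"
    using G_limD(3)[OF assms(2) c(1)] by simp
  also have "\<dots> = push (phi c t) (p t) (h c)"
    using assms(4)[OF c(2)] by simp
  also have "\<dots> = h t"
    using G_limD(3)[OF assms(3) c(1)] .
  finally show "g t = h t" .
qed

lemma card_supp_rho_le: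
  assumes "y \<in> smash Y q"
  shows "card (supp (rho p y t)) \<le> card (supp y)"
  using assms unfolding rho_def smash_def by (auto intro: card_supp_push_le)

lemma rho_in_G_lim:
  assumes "pointed_diagram X p phi" "y \<in> smash (lim_X X phi) p"
  shows "rho p y \<in> G_lim X p phi"
proof -
  have fin: "finite (supp y)" and lim: "supp y \<subseteq> lim_X X phi"
    using assms(2) by (auto simp: smash_def)
  have "supp (rho p y t) \<subseteq> X t - {p t}" for t
    using supp_push_subset[of "\<lambda>x. x t" "p t" y] lim by (auto simp: rho_def lim_X_def)
  moreover have "finite (supp (rho p y t))" for t
    using fin supp_push_subset[of "\<lambda>x. x t" "p t" y] unfolding rho_def
    by (meson Diff_subset finite_imageI finite_subset)
  moreover have "push (phi t s) (p s) (rho p y t) = rho p y s" if "s \<le> t" for s t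
  proof -
    have "push (phi t s) (p s) (rho p y t) = push (phi t s \<circ> (\<lambda>x. x t)) (p s) y"
      unfolding rho_def using fin pointed_diagramD(2)[OF assms(1) that] by (rule push_comp)
    also have "\<dots> = push (\<lambda>x. x s) (p s) y"
      using lim that by (intro push_congr) (auto simp: lim_X_def)
    finally show ?thesis
      by (simp add: rho_def)
  qed
  ultimately show ?thesis
    by (auto simp: G_lim_def smash_def)
qed

locale G_lim_max_support =
  fixes X :: "'t::order \<Rightarrow> 'x set" and p :: "'t \<Rightarrow> 'x"
    and phi :: "'t \<Rightarrow> 't \<Rightarrow> 'x \<Rightarrow> 'x"
    and h :: "'t \<Rightarrow> 'x \<Rightarrow> 'a::ab_group_add"
    and t0 :: 't
  assumes directed: "directed_poset TYPE('t)"
    and diagram: "pointed_diagram X p phi"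
    and h_G_lim: "h \<in> G_lim X p phi"
    and card_supp_max: "\<And>t. card (supp (h t)) \<le> card (supp (h t0))"
begin

lemma bij_betw_phi_supp:
  assumes "t0 \<le> s" "s \<le> t"
  shows "bij_betw (phi t s) (supp (h t)) (supp (h s))"
proof -
  have push_eq: "push (phi t s) (p s) (h t) = h s"
    using h_G_lim assms(2) by (rule G_limD(3))
  have "card (supp (h t0)) \<le> card (supp (h s))" "card (supp (h s)) \<le> card (supp (h t))"
    using card_supp_G_lim_mono[OF h_G_lim] assms by auto
  then have "card (supp (push (phi t s) (p s) (h t))) = card (supp (h t))"
    using card_supp_max[of t] push_eq by simp
  then show ?thesis
    using push_card_supp_eq_bij_betw[OF G_limD(1)[OF h_G_lim]] push_eq by metis
qed

definition lift :: "'t \<Rightarrow> 'x \<Rightarrow> 'x" where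
  "lift c = the_inv_into (supp (h c)) (phi c t0)"

lemma lift_in_supp:
  assumes "t0 \<le> c" "a \<in> supp (h t0)"
  shows "lift c a \<in> supp (h c)"
  using bij_betw_the_inv_into[OF bij_betw_phi_supp[OF order_refl assms(1)]] assms(2)
  unfolding lift_def by (auto simp: bij_betw_def)

lemma phi_lift:
  assumes "t0 \<le> c" "a \<in> supp (h t0)"
  shows "phi c t0 (lift c a) = a"
  using f_the_inv_into_f_bij_betw[OF bij_betw_phi_supp[OF order_refl assms(1)] assms(2)]
  unfolding lift_def .

lemma lift_phi:
  assumes "t0 \<le> c" "b \<in> supp (h c)"
  shows "lift c (phi c t0 b) = b"
  using the_inv_into_f_f[OF bij_betw_imp_inj_on[OF bij_betw_phi_supp[OF order_refl assms(1)]] assms(2)]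
  unfolding lift_def .

lemma lift_in_X:
  assumes "t0 \<le> c" "a \<in> supp (h t0)"
  shows "lift c a \<in> X c"
  using lift_in_supp[OF assms] G_limD(2)[OF h_G_lim] by blast

lemma phi_lift_lift:
  assumes "t0 \<le> c" "c \<le> d" "a \<in> supp (h t0)"
  shows "phi d c (lift d a) = lift c a"
proof -
  have t0_d: "t0 \<le> d"
    using assms(1,2) by (rule order_trans)
  have b: "phi d c (lift d a) \<in> supp (h c)"
    using bij_betw_phi_supp[OF assms(1,2)] lift_in_supp[OF t0_d assms(3)] by (auto simp: bij_betw_def)
  have "phi c t0 (phi d c (lift d a)) = a"
    using pointed_diagramD(4)[OF diagram assms(1,2) lift_in_X[OF t0_d assms(3)]]
      phi_lift[OF t0_d assms(3)] by simp
  then show ?thesis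
    using lift_phi[OF assms(1) b] by simp
qed

definition thread :: "'x \<Rightarrow> 't \<Rightarrow> 'x" where
  "thread a t = (let c = SOME c. t \<le> c \<and> t0 \<le> c in phi c t (lift c a))"

lemma thread_eq:
  assumes "t \<le> c" "t0 \<le> c" "a \<in> supp (h t0)"
  shows "thread a t = phi c t (lift c a)"
proof -
  have phi_lift_enlarge: "phi c' t (lift c' a) = phi d t (lift d a)"
    if "t \<le> c'" "t0 \<le> c'" "c' \<le> d" for c' d
    using pointed_diagramD(4)[OF diagram that(1,3) lift_in_X[OF order_trans[OF that(2,3)] assms(3)]]
      phi_lift_lift[OF that(2,3) assms(3)] by simp
  define u where "u = (SOME c. t \<le> c \<and> t0 \<le> c)"
  have "\<exists>c. t \<le> c \<and> t0 \<le> c"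
    using directed_posetD[OF directed, of t t0] by blast
  then have u: "t \<le> u \<and> t0 \<le> u"
    unfolding u_def by (rule someI_ex)
  obtain d where d: "c \<le> d" "u \<le> d"
    using directed_posetD[OF directed, of c u] by blast
  have "thread a t = phi u t (lift u a)"
    by (simp add: thread_def u_def Let_def)
  also have "\<dots> = phi d t (lift d a)"
    using u d(2) by (intro phi_lift_enlarge) auto
  also have "\<dots> = phi c t (lift c a)"
    using assms(1,2) d(1) by (rule phi_lift_enlarge[symmetric])
  finally show ?thesis .
qed

lemma thread_cofinal:
  assumes "t0 \<le> c" "a \<in> supp (h t0)"
  shows "thread a c = lift c a"
  using thread_eq[OF order_refl assms] pointed_diagramD(3)[OF diagram lift_in_X[OF assms]] by simp

lemma thread_in_lim_X:
  assumes "a \<in> supp (h t0)"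
  shows "thread a \<in> lim_X X phi"
proof -
  have "thread a t \<in> X t" for t
  proof -
    obtain c where c: "t \<le> c" "t0 \<le> c"
      using directed_posetD[OF directed, of t t0] by blast
    show ?thesis
      using thread_eq[OF c assms] pointed_diagramD(1)[OF diagram c(1) lift_in_X[OF c(2) assms]]
      by simp
  qed
  moreover have "phi t s (thread a t) = thread a s" if "s \<le> t" for s t
  proof -
    obtain c where c: "t \<le> c" "t0 \<le> c"
      using directed_posetD[OF directed, of t t0] by blast
    show ?thesis
      using thread_eq[OF c assms] thread_eq[OF order_trans[OF that c(1)] c(2) assms]
        pointed_diagramD(4)[OF diagram that c(1) lift_in_X[OF c(2) assms]] by simp
  qed
  ultimately show ?thesis
    by (simp add: lim_X_def)
qed

lemma push_lift:
  assumes "t0 \<le> c"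
  shows "push (lift c) (p c) (h t0) = h c"
proof -
  have h_t0: "h t0 = push (phi c t0) (p t0) (h c)"
    using G_limD(3)[OF h_G_lim assms] by simp
  show ?thesis
    unfolding h_t0
  proof (rule push_inverse)
    show "bij_betw (phi c t0) (supp (h c)) (supp (push (phi c t0) (p t0) (h c)))"
      using bij_betw_phi_supp[OF order_refl assms] h_t0 by simp
    show "lift c a \<in> supp (h c) \<and> phi c t0 (lift c a) = a"
      if "a \<in> supp (push (phi c t0) (p t0) (h c))" for a
      using that lift_in_supp[OF assms] phi_lift[OF assms] h_t0 by simp
    show "p c \<notin> supp (h c)"
      using G_limD(2)[OF h_G_lim] by blast
  qed
qed

lemma h_in_K_img: "h \<in> K_img X p phi"
proof -
  define y where "y = push thread p (h t0)"
  have "supp y \<subseteq> thread ` supp (h t0) - {p}"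
    unfolding y_def by (rule supp_push_subset)
  then have y_smash: "y \<in> smash (lim_X X phi) p"
    using G_limD(1)[OF h_G_lim] thread_in_lim_X unfolding smash_def
    by (auto intro: finite_subset)
  have "rho p y c = h c" if "t0 \<le> c" for c
  proof -
    have "rho p y c = push ((\<lambda>x. x c) \<circ> thread) (p c) (h t0)"
      unfolding rho_def y_def using G_limD(1)[OF h_G_lim] by (rule push_comp) simp
    also have "\<dots> = push (lift c) (p c) (h t0)"
      using thread_cofinal[OF that] by (intro push_congr) simp
    also have "\<dots> = h c"
      using that by (rule push_lift)
    finally show ?thesis .
  qed
  then have "rho p y = h"
    using G_lim_eqI_cofinal[OF directed rho_in_G_lim[OF diagram y_smash] h_G_lim] by blast
  with y_smash show ?thesis
    unfolding K_img_def by blast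
qed

end

theorem mainTheorem8:
  fixes X :: "'t::order \<Rightarrow> 'x set" and p :: "'t \<Rightarrow> 'x"
    and phi :: "'t \<Rightarrow> 't \<Rightarrow> 'x \<Rightarrow> 'x"
    and h :: "'t \<Rightarrow> 'x \<Rightarrow> 'a::ab_group_add"
  assumes "directed_poset TYPE('t)"
    and "pointed_diagram X p phi"
    and "h \<in> G_lim X p phi"
  shows "h \<in> K_img X p phi \<longleftrightarrow> (\<exists>B::nat. \<forall>t. card (supp (h t)) \<le> B)"
proof
  assume "h \<in> K_img X p phi"
  then obtain y where y: "y \<in> smash (lim_X X phi) p" "h = rho p y"
    unfolding K_img_def by blast
  then have "\<forall>t. card (supp (h t)) \<le> card (supp y)"
    using card_supp_rho_le[OF y(1)] by simp
  then show "\<exists>B::nat. \<forall>t. card (supp (h t)) \<le> B"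
    by blast
next
  assume "\<exists>B::nat. \<forall>t. card (supp (h t)) \<le> B"
  then obtain B :: nat where B: "\<And>t. card (supp (h t)) \<le> B"
    by blast
  obtain t0 where "\<And>t. card (supp (h t)) \<le> card (supp (h t0))"
    using bounded_nat_fun_has_max[of "\<lambda>t. card (supp (h t))", OF B] by blast
  then interpret G_lim_max_support X p phi h t0
    using assms by unfold_locales
  show "h \<in> K_img X p phi"
    by (rule h_in_K_img)
qed

end
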